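(* Let $\theta_p:C_2^{\rm SLB}(\mathbb Z_p)\to\mathbb Z_p$ be the $2$-cocycle given on generators by \[ \theta_p((a,b),(a,c))=(a-b)\,\frac{(a-b+2c)^p+(a+b)^p-2(a+c)^p}{p}\pmod p \] (computed with integer lifts, numerator in $\mathbb Z$). Let $D$ be a diagram of a Dehn $p$-colorable knot, $C$ a Dehn $p$-coloring of $D$, $s\in\mathbb Z_p^\times$, $t\in\mathbb Z_p$, and $C'=sC+t$ (the map $x\mapsto sC(x)+t$, which is again a Dehn $p$-coloring of $D$). Then \[ \theta_p(W(D,C'))=s^2\,\theta_p(W(D,C)). \]
   Context: Let $p$ be an odd prime, $X=\mathbb Z_p$, $[a,b,c]=a-b+c$, $\rho((a,b))=(b,a)$, $(a,b)\,\underline{\star}\,(a,c)=(c,[a,b,c])$, $(a,b)\,\overline{\star}\,(a,c)=(c,[a,c,b])$. For $n\ge1$ let $C_n^{\rm lb}(X)$ be the free abelian group on tuples $((a,b_1),\dots,(a,b_n))$, $a,b_i\in X$; $D_n^{\rm lb}(X)$ the subgroup generated by tuples with $b_i=b_{i+1}$ for some $i$; $D_n^{\rm lb}(X,\rho)$ the subgroup generated by all $((a,b_1),\dots,(a,b_n))+((a,b_1)\underline\star(a,b_i),\dots,(a,b_{i-1})\underline\star(a,b_i),\rho((a,b_i)),(a,b_{i+1})\overline\star(a,b_i),\dots,(a,b_n)\overline\star(a,b_i))$; and $C_n^{\rm SLB}(X)=C_n^{\rm lb}(X)/(D_n^{\rm lb}(X)+D_n^{\rm lb}(X,\rho))$.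 (The formula for $\theta_p$ is well defined on this quotient.) Dehn $p$-colorings: for a knot diagram $D$ with region set $\mathcal R(D)$, at each crossing label the four regions $x_1,x_2,x_3,x_4$ so that $x_2$ is adjacent to $x_1$ across an under-arc, $x_3$ adjacent to $x_1$ across the over-arc, $x_4$ opposite $x_1$; a Dehn $p$-coloring is $C:\mathcal R(D)\to\mathbb Z_p$ with $C(x_1)+C(x_3)=C(x_2)+C(x_4)$ at every crossing. At each crossing $\chi$ choose a specified region $x_1$, put $a=C(x_1),b=C(x_2),c=C(x_3)$, $w_\chi=\varepsilon((a,b),(a,c))\in C_2^{\rm SLB}(X)$ with $\varepsilon=+1$ if $(n_o,n_u)$ is a positively oriented basis of $\mathbb R^2$ and $-1$ otherwise ($n_u$ the normal vector from $x_1$ to $x_2$, $n_o$ from $x_1$ to $x_3$); $W(D,C)=\sum_\chi w_\chi$, which is independent of the choices of specified regions. *)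

theory Defs
  imports "HOL-Computational_Algebra.Primes"
begin

(* Combinatorial model of a knot diagram with n crossings (a 4-valent combinatorial map).
   Darts (c,q), c < n, q < 4: the four half-edges at crossing c, listed counterclockwise;
   q = 0,2 are the two halves of the under-strand, q = 1,3 the two halves of the over-strand.
   nb d is the dart at the other end of the edge of d.
   Corner (c,q) = the sector at crossing c between dart q and dart q+1 (counterclockwise);
   corners are identified with darts (c,q). *)

definition darts :: "nat \<Rightarrow> (nat \<times> nat) set" where
  "darts n = {..<n} \<times> {..<4}"

(* travelling along the knot: arrive at dart (c,q), go straight through to (c,q+2), follow edge *)
definition trav :: "(nat \<times> nat \<Rightarrow> nat \<times> nat) \<Rightarrow> nat \<times> nat \<Rightarrow> nat \<times> nat" where
  "trav nb d = nb (fst d, (snd d + 2) mod 4)"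

(* walking around a face: corner (c,q) is followed by corner nb (c,q+1) *)
definition fstep :: "(nat \<times> nat \<Rightarrow> nat \<times> nat) \<Rightarrow> nat \<times> nat \<Rightarrow> nat \<times> nat" where
  "fstep nb d = nb (fst d, (snd d + 1) mod 4)"

definition region_of :: "(nat \<times> nat \<Rightarrow> nat \<times> nat) \<Rightarrow> nat \<times> nat \<Rightarrow> (nat \<times> nat) set" where
  "region_of nb d = {(fstep nb ^^ k) d | k. True}"

definition regions :: "nat \<Rightarrow> (nat \<times> nat \<Rightarrow> nat \<times> nat) \<Rightarrow> (nat \<times> nat) set set" where
  "regions n nb = region_of nb ` darts n"

(* a knot diagram: nb is a fixed-point-free involution on darts; the curve has a single
   component (every dart is reached travelling from the under-strand at crossing 0 in one of the
   two directions); the map is planar (Euler: V - E + F = 2 with V = n, E = 2n). *)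
definition knot_diagram :: "nat \<Rightarrow> (nat \<times> nat \<Rightarrow> nat \<times> nat) \<Rightarrow> bool" where
  "knot_diagram n nb \<longleftrightarrow> 1 \<le> n
     \<and> (\<forall>d\<in>darts n. nb d \<in> darts n \<and> nb d \<noteq> d \<and> nb (nb d) = d)
     \<and> (\<forall>d\<in>darts n. \<exists>k. (trav nb ^^ k) (0,0) = d \<or> (trav nb ^^ k) (0,2) = d)
     \<and> card (regions n nb) = n + 2"

(* Dehn p-coloring: colour of each corner in Z_p = {0..<p}, constant on regions;
   at crossing c with x1 = corner 0: x2 = corner 3 (across under-arc), x3 = corner 1
   (across over-arc), x4 = corner 2; condition C(x1)+C(x3) = C(x2)+C(x4). *)
definition dehn_coloring :: "nat \<Rightarrow> nat \<Rightarrow> (nat \<times> nat \<Rightarrow> nat \<times> nat) \<Rightarrow> (nat \<times> nat \<Rightarrow> int) \<Rightarrow> bool" where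
  "dehn_coloring p n nb C \<longleftrightarrow>
     (\<forall>d\<in>darts n. 0 \<le> C d \<and> C d < int p)
     \<and> (\<forall>d\<in>darts n. C (fstep nb d) = C d)
     \<and> (\<forall>c<n. (C (c,0) + C (c,1)) mod int p = (C (c,3) + C (c,2)) mod int p)"

(* colour of the arc containing dart (c,q): sum of the two regions on its sides *)
definition arc_color :: "nat \<Rightarrow> (nat \<times> nat \<Rightarrow> int) \<Rightarrow> nat \<times> nat \<Rightarrow> int" where
  "arc_color p C d = (C (fst d, (snd d + 3) mod 4) + C d) mod int p"

definition dehn_colorable :: "nat \<Rightarrow> nat \<Rightarrow> (nat \<times> nat \<Rightarrow> nat \<times> nat) \<Rightarrow> bool" where
  "dehn_colorable p n nb \<longleftrightarrow> (\<exists>C. dehn_coloring p n nb C \<and>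
      (\<exists>d\<in>darts n. \<exists>e\<in>darts n. arc_color p C d \<noteq> arc_color p C e))"

(* generator ((a,b),(a,c)) of C_2^lb encoded as (a,b,c); chains of C_2^lb as finitely
   supported integer-valued functions on generators *)
type_synonym chain2 = "int \<times> int \<times> int \<Rightarrow> int"

(* weight of crossing c with specified corner q = sel c:
   eps = +1 for q even, -1 for q odd (derived from the counterclockwise convention) *)
definition cross_eps :: "nat \<Rightarrow> int" where
  "cross_eps q = (if even q then 1 else -1)"

definition cross_gen :: "(nat \<times> nat \<Rightarrow> int) \<Rightarrow> nat \<Rightarrow> nat \<Rightarrow> int \<times> int \<times> int" where
  "cross_gen C c q =
     (C (c, q),
      C (c, if even q then (q + 3) mod 4 else (q + 1) mod 4),
      C (c, if even q then (q + 1) mod 4 else (q + 3) mod 4))"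

definition W :: "nat \<Rightarrow> (nat \<times> nat \<Rightarrow> int) \<Rightarrow> (nat \<Rightarrow> nat) \<Rightarrow> chain2" where
  "W n C sel = (\<lambda>g. \<Sum>c<n. if cross_gen C c (sel c) = g then cross_eps (sel c) else 0)"

definition theta_gen :: "nat \<Rightarrow> int \<times> int \<times> int \<Rightarrow> int" where
  "theta_gen p g = (case g of (a0, b0, c0) \<Rightarrow>
      let a = a0 mod int p; b = b0 mod int p; c = c0 mod int p in
      ((a - b) * (((a - b + 2 * c) ^ p + (a + b) ^ p - 2 * (a + c) ^ p) div int p)) mod int p)"

definition theta :: "nat \<Rightarrow> chain2 \<Rightarrow> int" where
  "theta p w = (\<Sum>g\<in>{g. w g \<noteq> 0}. w g * theta_gen p g) mod int p"

end

(*
  By the independence of the crossing weights from the specified regions, theta of W(D,C)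
  is the sum over the crossings of theta_gen at a fixed corner. Writing theta_gen through
  the second difference A^p + B^p - 2 Z^p of the p-th power (A + B = 2 Z) and expanding
  (s A + 2t)^p etc. binomially, the affine change of colours multiplies the crossing term
  by s^(p+1) = s^2 (mod p), up to the terms (p choose k)/p * s^(k+1) (2t)^(p-k) times the
  sums over all crossings of (a - b)((a - b + 2c)^k + (a + b)^k - 2 (a + c)^k). These
  vanish mod p because they regroup as a sum over the edges of the diagram in which the
  two ends of every edge cancel.
*)

theory Submission
  imports Defs "HOL-Number_Theory.Number_Theory"
begin

lemma fermat_theorem_int:
  fixes x :: int
  assumes p: "prime p"
  shows "[x ^ p = x] (mod int p)"
proof -
  define r where "r = nat (x mod int p)"
  have "p > 0" using p prime_gt_0_nat by blast
  then have xr: "[x = int r] (mod int p)" and "r < p"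
    unfolding r_def by (simp_all add: cong_def nat_less_iff)
  have "[int r ^ p = int r] (mod int p)"
  proof (cases "r = 0")
    case True
    then show ?thesis using \<open>p > 0\<close> by (simp add: zero_power)
  next
    case False
    with \<open>r < p\<close> have "\<not> p dvd r" by (auto dest: dvd_imp_le)
    then have "[r ^ (p - 1) * r = 1 * r] (mod p)"
      using fermat_theorem p by (blast intro: cong_scalar_right)
    then have "[r ^ p = r] (mod p)"
      using \<open>p > 0\<close> by (metis Suc_diff_1 mult.commute mult_1 power_Suc)
    then show ?thesis by (metis cong_int_iff of_nat_power)
  qed
  with xr show ?thesis by (meson cong_pow cong_sym cong_trans)
qed

lemma cong_pow_modulus_square:
  fixes x y :: int
  assumes xy: "[x = y] (mod int m)"
  shows "[x ^ m = y ^ m] (mod (int m)^2)"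
proof -
  have "[(\<Sum>i<m. y^(m - Suc i) * x^i) = (\<Sum>i<m. y^(m - Suc i) * y^i)] (mod int m)"
    by (intro cong_sum cong_scalar_left cong_pow xy)
  also have "(\<Sum>i<m. y^(m - Suc i) * y^i) = int m * y^(m - 1)"
    by (simp add: power_add[symmetric])
  finally have "int m dvd (\<Sum>i<m. y^(m - Suc i) * x^i)"
    by (simp add: cong_0_iff cong_dvd_iff)
  moreover have "int m dvd (x - y)" using xy by (simp add: cong_iff_dvd_diff)
  ultimately have "int m * int m dvd (x - y) * (\<Sum>i<m. y^(m - Suc i) * x^i)"
    by (simp add: mult_dvd_mono)
  then show ?thesis by (simp add: cong_iff_dvd_diff power_diff_sumr2 power2_eq_square)
qed

definition midpoint_defect :: "nat \<Rightarrow> int \<Rightarrow> int \<Rightarrow> int \<Rightarrow> int" where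
  "midpoint_defect k A B Z = A^k + B^k - 2 * Z^k"

definition theta_val :: "nat \<Rightarrow> int \<Rightarrow> int \<Rightarrow> int \<Rightarrow> int \<Rightarrow> int" where
  "theta_val p u A B Z = (u * (midpoint_defect p A B Z div int p)) mod int p"

definition gen_defect :: "nat \<Rightarrow> int \<times> int \<times> int \<Rightarrow> int" where
  "gen_defect k g = (case g of (a, b, c) \<Rightarrow>
     (a - b) * midpoint_defect k (a - b + 2 * c) (a + b) (a + c))"

lemma midpoint_defect_dvd:
  assumes p: "prime p" and h: "[A + B = 2 * Z] (mod int p)"
  shows "int p dvd midpoint_defect p A B Z"
proof -
  have "[midpoint_defect p A B Z = A + B - 2 * Z] (mod int p)"
    unfolding midpoint_defect_def using fermat_theorem_int[OF p]
    by (intro cong_diff cong_add cong_scalar_left)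
  also have "[A + B - 2 * Z = 0] (mod int p)" using h by (simp add: cong_iff_dvd_diff)
  finally show ?thesis by (simp add: cong_0_iff)
qed

lemma midpoint_defect_cong:
  assumes "[A = A'] (mod int p)" "[B = B'] (mod int p)" "[Z = Z'] (mod int p)"
  shows "[midpoint_defect p A B Z = midpoint_defect p A' B' Z'] (mod (int p)^2)"
  unfolding midpoint_defect_def using assms
  by (intro cong_diff cong_add cong_scalar_left cong_pow_modulus_square)

text \<open>Only the residues of the arguments matter: the numerator is determined modulo \<open>p\<^sup>2\<close>,
  hence its quotient by \<open>p\<close> modulo \<open>p\<close>.\<close>

lemma theta_val_cong:
  assumes p: "prime p" and u: "[u = u'] (mod int p)" and A: "[A = A'] (mod int p)"
    and B: "[B = B'] (mod int p)" and Z: "[Z = Z'] (mod int p)"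
    and h: "[A + B = 2 * Z] (mod int p)"
  shows "theta_val p u A B Z = theta_val p u' A' B' Z'"
proof -
  have "[A' + B' = 2 * Z'] (mod int p)"
    using cong_add[OF A B] h cong_scalar_left[OF Z, of 2] by (meson cong_sym cong_trans)
  then obtain y where y: "midpoint_defect p A' B' Z' = int p * y"
    using midpoint_defect_dvd[OF p] by blast
  obtain x where x: "midpoint_defect p A B Z = int p * x"
    using midpoint_defect_dvd[OF p h] by blast
  have "int p \<noteq> 0" using p by auto
  have "int p * int p dvd int p * (x - y)"
    using midpoint_defect_cong[OF A B Z] x y
    by (simp add: cong_iff_dvd_diff right_diff_distrib power2_eq_square)
  with \<open>int p \<noteq> 0\<close> have "[x = y] (mod int p)" by (simp add: cong_iff_dvd_diff)
  with u have "[u * x = u' * y] (mod int p)" by (rule cong_mult)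
  with x y \<open>int p \<noteq> 0\<close> show ?thesis by (simp add: theta_val_def cong_def)
qed

lemma theta_val_swap: "theta_val p u A B Z = theta_val p u B A Z"
  unfolding theta_val_def midpoint_defect_def by (simp add: add.commute)

lemma theta_val_uminus: "theta_val p (- u) A B Z = (- theta_val p u A B Z) mod int p"
  unfolding theta_val_def by (simp add: mod_minus_eq)

lemma theta_gen_cong:
  assumes "[a = a'] (mod int p)" "[b = b'] (mod int p)" "[c = c'] (mod int p)"
  shows "theta_gen p (a, b, c) = theta_gen p (a', b', c')"
  using assms by (simp add: theta_gen_def cong_def)

lemma theta_gen_mod: "theta_gen p (a mod int p, b mod int p, c mod int p) = theta_gen p (a, b, c)"
  by (simp add: theta_gen_def)

lemma theta_gen_eq_theta_val:
  assumes p: "prime p"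
  shows "theta_gen p (a, b, c) = theta_val p (a - b) (a - b + 2 * c) (a + b) (a + c)"
proof -
  let ?r = "\<lambda>x. x mod int p"
  have "theta_gen p (a, b, c)
      = theta_val p (?r a - ?r b) (?r a - ?r b + 2 * ?r c) (?r a + ?r b) (?r a + ?r c)"
    unfolding theta_gen_def theta_val_def midpoint_defect_def Let_def by simp
  also have "\<dots> = theta_val p (a - b) (a - b + 2 * c) (a + b) (a + c)"
  proof (rule theta_val_cong[OF p])
    have r: "[?r x = x] (mod int p)" for x by (simp add: cong_def)
    show "[?r a - ?r b = a - b] (mod int p)"
      and "[?r a - ?r b + 2 * ?r c = a - b + 2 * c] (mod int p)"
      and "[?r a + ?r b = a + b] (mod int p)"
      and "[?r a + ?r c = a + c] (mod int p)"
      by (intro cong_add cong_diff cong_scalar_left r)+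
  qed simp
  finally show ?thesis .
qed

text \<open>Changing the specified region at a crossing: \<open>(a, b, c)\<close> are the colours of
  \<open>x\<^sub>1, x\<^sub>2, x\<^sub>3\<close>, so the opposite region \<open>x\<^sub>4\<close> has colour \<open>a + c - b\<close>.\<close>

lemma theta_gen_across_over:
  assumes p: "prime p"
  shows "theta_gen p (c, a + c - b, a) = (- theta_gen p (a, b, c)) mod int p"
proof -
  have "theta_gen p (c, a + c - b, a) = theta_val p (- (a - b)) (a + b) (a - b + 2 * c) (a + c)"
    unfolding theta_gen_eq_theta_val[OF p] by (simp add: algebra_simps)
  also have "\<dots> = theta_val p (- (a - b)) (a - b + 2 * c) (a + b) (a + c)"
    by (rule theta_val_swap)
  also have "\<dots> = (- theta_gen p (a, b, c)) mod int p"
    unfolding theta_gen_eq_theta_val[OF p] by (rule theta_val_uminus)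
  finally show ?thesis .
qed

lemma theta_gen_opposite:
  assumes p: "prime p"
  shows "theta_gen p (a + c - b, c, b) = theta_gen p (a, b, c)"
proof -
  have "theta_gen p (a + c - b, c, b) = theta_val p (a - b) (a + b) (a - b + 2 * c) (a + c)"
    unfolding theta_gen_eq_theta_val[OF p] by (simp add: algebra_simps)
  also have "\<dots> = theta_gen p (a, b, c)"
    unfolding theta_gen_eq_theta_val[OF p] by (rule theta_val_swap)
  finally show ?thesis .
qed

lemma theta_gen_across_under:
  assumes p: "prime p"
  shows "theta_gen p (b, a, a + c - b) = (- theta_gen p (a, b, c)) mod int p"
proof -
  have "theta_gen p (b, a, a + c - b) = theta_val p (- (a - b)) (a - b + 2 * c) (a + b) (a + c)"
    unfolding theta_gen_eq_theta_val[OF p] by (simp add: algebra_simps)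
  also have "\<dots> = (- theta_gen p (a, b, c)) mod int p"
    unfolding theta_gen_eq_theta_val[OF p] by (rule theta_val_uminus)
  finally show ?thesis .
qed

lemma cross_gen_0: "cross_gen C i 0 = (C (i,0), C (i,3), C (i,1))"
  by (simp add: cross_gen_def)

lemma theta_gen_cross_gen_cong:
  assumes p: "prime p" and q: "q < 4"
    and dehn: "[C (i,0) + C (i,1) = C (i,3) + C (i,2)] (mod int p)"
  shows "[cross_eps q * theta_gen p (cross_gen C i q) = theta_gen p (cross_gen C i 0)] (mod int p)"
proof -
  have d: "[C (i,2) = C (i,0) + C (i,1) - C (i,3)] (mod int p)"
    using dehn by (simp add: cong_iff_dvd_diff dvd_diff_commute algebra_simps)
  have neg: "[- 1 * ((- x) mod int p) = x] (mod int p)" for x :: int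
    by (simp add: cong_def mod_minus_eq)
  consider "q = 0" | "q = 1" | "q = 2" | "q = 3" using q by linarith
  then show ?thesis
  proof cases
    case 1
    then show ?thesis by (simp add: cross_eps_def)
  next
    case 2
    have "theta_gen p (cross_gen C i q) = theta_gen p (C (i,1), C (i,0) + C (i,1) - C (i,3), C (i,0))"
      using 2 theta_gen_cong[OF cong_refl d cong_refl] by (simp add: cross_gen_def numeral_2_eq_2)
    then show ?thesis using 2 neg by (simp add: cross_eps_def cross_gen_0 theta_gen_across_over[OF p])
  next
    case 3
    have "theta_gen p (cross_gen C i q) = theta_gen p (C (i,0) + C (i,1) - C (i,3), C (i,1), C (i,3))"
      using 3 theta_gen_cong[OF d cong_refl cong_refl] by (simp add: cross_gen_def)
    then show ?thesis using 3 by (simp add: cross_eps_def cross_gen_0 theta_gen_opposite[OF p])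
  next
    case 4
    have "theta_gen p (cross_gen C i q) = theta_gen p (C (i,3), C (i,0), C (i,0) + C (i,1) - C (i,3))"
      using 4 theta_gen_cong[OF cong_refl cong_refl d] by (simp add: cross_gen_def)
    then show ?thesis using 4 neg by (simp add: cross_eps_def cross_gen_0 theta_gen_across_under[OF p])
  qed
qed

lemma theta_W_eq_sum:
  "theta p (W n C sel) = (\<Sum>i<n. cross_eps (sel i) * theta_gen p (cross_gen C i (sel i))) mod int p"
proof -
  let ?g = "\<lambda>i. cross_gen C i (sel i)"
  let ?G = "?g ` {..<n}"
  let ?w = "W n C sel"
  have "?w g = 0" if "g \<notin> ?G" for g
    using that unfolding W_def by (intro sum.neutral) auto
  then have "(\<Sum>g\<in>{g. ?w g \<noteq> 0}. ?w g * theta_gen p g) = (\<Sum>g\<in>?G. ?w g * theta_gen p g)"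
    by (intro sum.mono_neutral_left) auto
  also have "\<dots> = (\<Sum>g\<in>?G. \<Sum>i<n. if ?g i = g then cross_eps (sel i) * theta_gen p g else 0)"
    unfolding W_def sum_distrib_right by (intro sum.cong refl) simp
  also have "\<dots> = (\<Sum>i<n. \<Sum>g\<in>?G. if ?g i = g then cross_eps (sel i) * theta_gen p g else 0)"
    by (rule sum.swap)
  also have "\<dots> = (\<Sum>i<n. cross_eps (sel i) * theta_gen p (?g i))"
    by (intro sum.cong refl) (simp add: sum.delta)
  finally show ?thesis by (simp add: theta_def)
qed

lemma theta_W_dehn_coloring:
  assumes p: "prime p" and C: "dehn_coloring p n nb C" and sel: "\<forall>i<n. sel i < 4"
  shows "theta p (W n C sel) = (\<Sum>i<n. theta_gen p (cross_gen C i 0)) mod int p"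
proof -
  have "[C (i,0) + C (i,1) = C (i,3) + C (i,2)] (mod int p)" if "i < n" for i
    using C that by (simp add: dehn_coloring_def cong_def)
  then have "[(\<Sum>i<n. cross_eps (sel i) * theta_gen p (cross_gen C i (sel i)))
      = (\<Sum>i<n. theta_gen p (cross_gen C i 0))] (mod int p)"
    using sel by (intro cong_sum theta_gen_cross_gen_cong[OF p]) auto
  then show ?thesis by (simp add: theta_W_eq_sum cong_def)
qed

lemma midpoint_defect_affine:
  "midpoint_defect n (s * A + w) (s * B + w) (s * Z + w)
     = (\<Sum>k\<le>n. int (n choose k) * s^k * w^(n - k) * midpoint_defect k A B Z)"
  unfolding midpoint_defect_def binomial_ring
  by (simp add: sum_subtractf sum.distrib sum_distrib_left algebra_simps power_mult_distrib)

lemma midpoint_defect_affine_div: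
  assumes p: "prime p" and h: "A + B = 2 * Z"
  shows "midpoint_defect p (s * A + w) (s * B + w) (s * Z + w) div int p
     = s^p * (midpoint_defect p A B Z div int p)
       + (\<Sum>k\<in>{1..<p}. (int (p choose k) div int p) * s^k * w^(p - k) * midpoint_defect k A B Z)"
proof -
  define F where "F k = int (p choose k) * s^k * w^(p - k) * midpoint_defect k A B Z" for k
  have "p > 0" using p prime_gt_0_nat by blast
  then have "{..p} = insert p (insert 0 {1..<p})" by auto
  with \<open>p > 0\<close> have "(\<Sum>k\<le>p. F k) = F p + F 0 + (\<Sum>k\<in>{1..<p}. F k)"
    by (simp add: add.assoc)
  also have "F 0 = 0" by (simp add: F_def midpoint_defect_def)
  also have "F p = s^p * midpoint_defect p A B Z" by (simp add: F_def)
  also have "(\<Sum>k\<in>{1..<p}. F k)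
      = int p * (\<Sum>k\<in>{1..<p}. (int (p choose k) div int p) * s^k * w^(p - k) * midpoint_defect k A B Z)"
    unfolding sum_distrib_left
  proof (intro sum.cong refl)
    fix k assume "k \<in> {1..<p}"
    then have "int p dvd int (p choose k)" using dvd_choose_prime[of k p] p by auto
    then show "F k = int p * ((int (p choose k) div int p) * s^k * w^(p - k) * midpoint_defect k A B Z)"
      by (simp add: F_def)
  qed
  finally have expand: "midpoint_defect p (s * A + w) (s * B + w) (s * Z + w)
      = s^p * midpoint_defect p A B Z
        + int p * (\<Sum>k\<in>{1..<p}. (int (p choose k) div int p) * s^k * w^(p - k) * midpoint_defect k A B Z)"
    by (simp add: midpoint_defect_affine F_def)
  obtain x where x: "midpoint_defect p A B Z = int p * x"
    using midpoint_defect_dvd[OF p, of A B Z] h by (auto elim: dvdE)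
  have "int p \<noteq> 0" using p by auto
  with x show ?thesis unfolding expand by (simp add: algebra_simps)
qed

lemma theta_val_affine_cong:
  assumes p: "prime p" and h: "A + B = 2 * Z"
  shows "[theta_val p (s * u) (s * A + w) (s * B + w) (s * Z + w)
     = s^2 * theta_val p u A B Z
       + (\<Sum>k\<in>{1..<p}. (int (p choose k) div int p) * s^(k + 1) * w^(p - k) * (u * midpoint_defect k A B Z))]
     (mod int p)"
proof -
  let ?q = "midpoint_defect p A B Z div int p"
  let ?S = "\<Sum>k\<in>{1..<p}. (int (p choose k) div int p) * s^(k + 1) * w^(p - k) * (u * midpoint_defect k A B Z)"
  have "[theta_val p (s * u) (s * A + w) (s * B + w) (s * Z + w) = s^p * s * (u * ?q) + ?S] (mod int p)"
    unfolding theta_val_def midpoint_defect_affine_div[OF p h]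
    by (simp add: cong_def sum_distrib_left algebra_simps)
  also have "[s^p * s * (u * ?q) + ?S = s * s * theta_val p u A B Z + ?S] (mod int p)"
    unfolding theta_val_def
    by (intro cong_add cong_mult fermat_theorem_int[OF p] cong_refl) (simp add: cong_def)
  finally show ?thesis by (simp add: power2_eq_square)
qed

lemma theta_gen_affine_cong:
  assumes p: "prime p"
  shows "[theta_gen p (s * a + t, s * b + t, s * c + t)
     = s^2 * theta_gen p (a, b, c)
       + (\<Sum>k\<in>{1..<p}. (int (p choose k) div int p) * s^(k + 1) * (2 * t)^(p - k) * gen_defect k (a, b, c))]
     (mod int p)"
proof -
  have "theta_gen p (s * a + t, s * b + t, s * c + t)
      = theta_val p (s * (a - b)) (s * (a - b + 2 * c) + 2 * t) (s * (a + b) + 2 * t) (s * (a + c) + 2 * t)"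
    unfolding theta_gen_eq_theta_val[OF p] by (simp add: algebra_simps)
  then show ?thesis
    using theta_val_affine_cong[OF p, of "a - b + 2 * c" "a + b" "a + c" s "a - b" "2 * t"]
    by (simp add: theta_gen_eq_theta_val[OF p] gen_defect_def)
qed

lemma sum_theta_gen_affine_cong:
  assumes p: "prime p"
    and defect: "\<And>k. [(\<Sum>i\<in>I. gen_defect k (a i, b i, c i)) = 0] (mod int p)"
  shows "[(\<Sum>i\<in>I. theta_gen p (s * a i + t, s * b i + t, s * c i + t))
     = s^2 * (\<Sum>i\<in>I. theta_gen p (a i, b i, c i))] (mod int p)"
proof -
  define e where "e k = (int (p choose k) div int p) * s^(k + 1) * (2 * t)^(p - k)" for k
  have "[(\<Sum>i\<in>I. theta_gen p (s * a i + t, s * b i + t, s * c i + t))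
      = (\<Sum>i\<in>I. s^2 * theta_gen p (a i, b i, c i) + (\<Sum>k\<in>{1..<p}. e k * gen_defect k (a i, b i, c i)))]
      (mod int p)"
    unfolding e_def by (intro cong_sum theta_gen_affine_cong[OF p])
  also have "(\<Sum>i\<in>I. s^2 * theta_gen p (a i, b i, c i) + (\<Sum>k\<in>{1..<p}. e k * gen_defect k (a i, b i, c i)))
      = s^2 * (\<Sum>i\<in>I. theta_gen p (a i, b i, c i)) + (\<Sum>k\<in>{1..<p}. e k * (\<Sum>i\<in>I. gen_defect k (a i, b i, c i)))"
    by (simp add: sum.distrib sum_distrib_left sum.swap[of _ I])
  also have "[\<dots> = s^2 * (\<Sum>i\<in>I. theta_gen p (a i, b i, c i)) + (\<Sum>k\<in>{1..<p}. e k * 0)] (mod int p)"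
    by (intro cong_add cong_refl cong_sum cong_scalar_left defect)
  finally show ?thesis by simp
qed

lemma sum_involution_antisym_eq_0:
  fixes h :: "'a \<Rightarrow> 'b::linordered_ab_group_add"
  assumes f: "\<forall>d\<in>S. f d \<in> S \<and> f (f d) = d" and h: "\<And>d. d \<in> S \<Longrightarrow> h (f d) = - h d"
  shows "sum h S = 0"
proof -
  have "bij_betw f S S" using f by (intro bij_betwI[where g = f]) auto
  then have "sum h S = sum (h \<circ> f) S" by (simp add: sum.reindex_bij_betw)
  also have "\<dots> = - sum h S" using h by (simp add: sum_negf[symmetric])
  finally show ?thesis by simp
qed

lemma crossing_defect_cong:
  fixes a b c d :: int
  assumes "[d = a + c - b] (mod m)"
  shows "[(a - b) * (b + a)^k + (c - a) * (a + c)^k + (d - c) * (c + d)^k + (b - d) * (d + b)^k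
      = gen_defect k (a, b, c)] (mod m)"
proof -
  let ?d = "a + c - b"
  have "[(a - b) * (b + a)^k + (c - a) * (a + c)^k + (d - c) * (c + d)^k + (b - d) * (d + b)^k
      = (a - b) * (b + a)^k + (c - a) * (a + c)^k + (?d - c) * (c + ?d)^k + (b - ?d) * (?d + b)^k] (mod m)"
    using assms by (intro cong_add cong_mult cong_diff cong_pow cong_refl)
  also have "(?d - c) * (c + ?d)^k = (a - b) * (a - b + 2 * c)^k" by (simp add: algebra_simps)
  also have "(b - ?d) * (?d + b)^k = (2 * b - a - c) * (a + c)^k" by (simp add: algebra_simps)
  also have "(a - b) * (b + a)^k + (c - a) * (a + c)^k + (a - b) * (a - b + 2 * c)^k
      + (2 * b - a - c) * (a + c)^k = gen_defect k (a, b, c)"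
    by (simp add: gen_defect_def midpoint_defect_def algebra_simps)
  finally show ?thesis .
qed

text \<open>Each edge of the diagram, seen from its two end darts, contributes
  \<open>(y - x) (x + y)\<^sup>k\<close> and \<open>(x - y) (x + y)\<^sup>k\<close>, where \<open>x, y\<close> are the colours of the
  two regions along it; so the contributions of all darts cancel, while around a single
  crossing they sum to the defect of its generator.\<close>

lemma sum_gen_defect_cong_0:
  assumes knot: "knot_diagram n nb" and C: "dehn_coloring p n nb C"
  shows "[(\<Sum>i<n. gen_defect k (cross_gen C i 0)) = 0] (mod int p)"
proof -
  define prev where "prev d = (fst d, (snd d + 3) mod 4)" for d :: "nat \<times> nat"
  define h where "h d = (C d - C (prev d)) * (C (prev d) + C d)^k" for d
  have nb: "\<forall>d\<in>darts n. nb d \<in> darts n \<and> nb (nb d) = d"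
    using knot by (simp add: knot_diagram_def)
  have face: "C (fstep nb d) = C d" if "d \<in> darts n" for d
    using C that by (simp add: dehn_coloring_def)
  have prev: "prev d \<in> darts n \<and> fstep nb (prev d) = nb d" if "d \<in> darts n" for d
    using that by (auto simp: prev_def darts_def fstep_def mod_Suc_eq)
  have "h (nb d) = - h d" if "d \<in> darts n" for d
  proof -
    have "C (nb d) = C (prev d)" using face prev that by metis
    moreover have "C (prev (nb d)) = C d" using face prev nb that by metis
    ultimately show ?thesis by (simp add: h_def algebra_simps)
  qed
  with nb have "sum h (darts n) = 0" by (rule sum_involution_antisym_eq_0)
  moreover have "sum h (darts n) = (\<Sum>i<n. \<Sum>q<4. h (i, q))"
    unfolding darts_def by (simp add: sum.cartesian_product)
  moreover have "[(\<Sum>i<n. \<Sum>q<4. h (i, q)) = (\<Sum>i<n. gen_defect k (cross_gen C i 0))] (mod int p)"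
  proof (rule cong_sum)
    fix i assume "i \<in> {..<n}"
    then have "[C (i,0) + C (i,1) = C (i,3) + C (i,2)] (mod int p)"
      using C by (simp add: dehn_coloring_def cong_def)
    then have "[C (i,2) = C (i,0) + C (i,1) - C (i,3)] (mod int p)"
      by (simp add: cong_iff_dvd_diff dvd_diff_commute algebra_simps)
    moreover have "(\<Sum>q<4. h (i, q)) = h (i,0) + h (i,1) + h (i,2) + h (i,3)"
      by (simp add: numeral_eq_Suc lessThan_Suc add.assoc)
    ultimately show "[(\<Sum>q<4. h (i, q)) = gen_defect k (cross_gen C i 0)] (mod int p)"
      using crossing_defect_cong by (simp add: cross_gen_0 h_def prev_def)
  qed
  ultimately show ?thesis by (simp add: cong_sym)
qed

lemma dehn_coloring_affine:
  assumes "p > 0" and C: "dehn_coloring p n nb C"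
  shows "dehn_coloring p n nb (\<lambda>x. (s * C x + t) mod int p)"
proof -
  have "((s * C (i,0) + t) mod int p + (s * C (i,1) + t) mod int p) mod int p
      = ((s * C (i,3) + t) mod int p + (s * C (i,2) + t) mod int p) mod int p" if "i < n" for i
  proof -
    have "[C (i,0) + C (i,1) = C (i,3) + C (i,2)] (mod int p)"
      using C that by (simp add: dehn_coloring_def cong_def)
    then have "[s * (C (i,0) + C (i,1)) + 2 * t = s * (C (i,3) + C (i,2)) + 2 * t] (mod int p)"
      by (rule cong_add[OF cong_scalar_left cong_refl])
    then show ?thesis
      by (simp add: cong_def mod_add_eq algebra_simps)
  qed
  with assms show ?thesis by (simp add: dehn_coloring_def)
qed

theorem proposition4p5:
  fixes p n :: nat and nb :: "nat \<times> nat \<Rightarrow> nat \<times> nat"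
    and C :: "nat \<times> nat \<Rightarrow> int" and s t :: int and sel sel' :: "nat \<Rightarrow> nat"
  assumes "prime p" and "odd p"
    and "knot_diagram n nb"
    and "dehn_colorable p n nb"
    and "dehn_coloring p n nb C"
    and "\<not> int p dvd s"
    and "\<forall>c<n. sel c < 4" and "\<forall>c<n. sel' c < 4"
  shows "theta p (W n (\<lambda>x. (s * C x + t) mod int p) sel')
         = (s ^ 2 * theta p (W n C sel)) mod int p"
proof -
  note p = \<open>prime p\<close> and C = \<open>dehn_coloring p n nb C\<close>
  let ?C' = "\<lambda>x. (s * C x + t) mod int p"
  have C': "dehn_coloring p n nb ?C'"
    using dehn_coloring_affine[OF prime_gt_0_nat[OF p] C] .
  have "[(\<Sum>i<n. theta_gen p (cross_gen ?C' i 0)) = s^2 * (\<Sum>i<n. theta_gen p (cross_gen C i 0))]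
      (mod int p)"
    using sum_theta_gen_affine_cong[OF p, where a = "\<lambda>i. C (i,0)" and b = "\<lambda>i. C (i,3)"
        and c = "\<lambda>i. C (i,1)" and I = "{..<n}" and s = s and t = t]
      sum_gen_defect_cong_0[OF \<open>knot_diagram n nb\<close> C]
    by (simp add: cross_gen_0 theta_gen_mod)
  then show ?thesis
    unfolding theta_W_dehn_coloring[OF p C' \<open>\<forall>c<n. sel' c < 4\<close>]
      theta_W_dehn_coloring[OF p C \<open>\<forall>c<n. sel c < 4\<close>]
    by (simp add: cong_def mod_mult_right_eq)
qed

end
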